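(* Let $U$ be a compact right topological semigroup and let $M$ be a finite monoid acting on $U$ by continuous endomorphisms. Assume that $ab=b$ for all $a,b\in M$ with $b\neq 1_M$. Then there exists an idempotent $u_1\in E(U)$, minimal with respect to $\leq^U$ in $E(U)$, such that (i) $u_1\in I(U)$, and (ii) $a(u_1)=b(u_1)$ for all $a,b\in M$ with $a\neq 1_M\neq b$.
   Context: The identity $1_M$ acts as the identity; each $u\mapsto a(u)$ is a continuous semigroup endomorphism of $U$. $U$ right topological: $x\mapsto xu$ continuous for each $u$. $E(U)$ = idempotents; $u\leq^U v$ iff $uv=vu=u$; $I(U)$ = smallest compact two-sided ideal of $U$. *)

theory Defs
  imports "HOL-Analysis.Analysis"
begin

definition right_topological_semigroup :: "('a::{topological_space,semigroup_mult}) set \<Rightarrow> bool" where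
  "right_topological_semigroup U \<longleftrightarrow>
     (\<forall>x\<in>U. \<forall>y\<in>U. x * y \<in> U) \<and> (\<forall>u\<in>U. continuous_on U (\<lambda>x. x * u))"

definition idempotents :: "('a::semigroup_mult) set \<Rightarrow> 'a set" where
  "idempotents U = {u\<in>U. u * u = u}"

definition idem_le :: "'a::semigroup_mult \<Rightarrow> 'a \<Rightarrow> bool" where
  "idem_le u v \<longleftrightarrow> u * v = u \<and> v * u = u"

definition minimal_idempotent :: "('a::semigroup_mult) set \<Rightarrow> 'a \<Rightarrow> bool" where
  "minimal_idempotent U u \<longleftrightarrow>
     u \<in> idempotents U \<and> (\<forall>v\<in>idempotents U. idem_le v u \<longrightarrow> v = u)"

definition two_sided_ideal :: "('a::semigroup_mult) set \<Rightarrow> 'a set \<Rightarrow> bool" where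
  "two_sided_ideal U J \<longleftrightarrow> J \<noteq> {} \<and> J \<subseteq> U \<and>
     (\<forall>x\<in>U. \<forall>y\<in>J. x * y \<in> J \<and> y * x \<in> J)"

definition smallest_ideal :: "('a::semigroup_mult) set \<Rightarrow> 'a set" where
  "smallest_ideal U = \<Inter>{J. two_sided_ideal U J}"

definition monoid_acts_by_cont_endos ::
  "('m::monoid_mult) set \<Rightarrow> ('m \<Rightarrow> 'a \<Rightarrow> 'a) \<Rightarrow> ('a::{topological_space,semigroup_mult}) set \<Rightarrow> bool" where
  "monoid_acts_by_cont_endos M act U \<longleftrightarrow>
     1 \<in> M \<and> (\<forall>a\<in>M. \<forall>b\<in>M. a * b \<in> M) \<and>
     (\<forall>u\<in>U. act 1 u = u) \<and>
     (\<forall>a\<in>M. \<forall>b\<in>M. \<forall>u\<in>U. act (a * b) u = act a (act b u)) \<and>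
     (\<forall>a\<in>M. act a ` U \<subseteq> U \<and> continuous_on U (act a) \<and>
        (\<forall>x\<in>U. \<forall>y\<in>U. act a (x * y) = act a x * act a y))"

end

theory Submission
  imports Defs
begin

text \<open>Pick e \<noteq> 1 in M and a minimal idempotent v of the compact subsemigroup e(U). Below v
  there is a minimal idempotent u of U lying in I(U): with L \<subseteq> U v a minimal left ideal and
  w an idempotent of L, take u = v w. For a \<noteq> 1 the absorption laws a e = e and e a = a show
  that a fixes v and maps u into e(U); so a(u) is an idempotent of e(U) below a(v) = v,
  hence a(u) = v by minimality.\<close>

lemma compact_Inter_chain:
  fixes \<C> :: "'a::t2_space set set"
  assumes "\<C> \<noteq> {}" and "\<And>A. A \<in> \<C> \<Longrightarrow> compact A \<and> A \<noteq> {}"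
    and "subset.chain \<A> \<C>"
  shows "compact (\<Inter>\<C>) \<and> \<Inter>\<C> \<noteq> {}"
proof
  obtain X where X: "X \<in> \<C>" using assms(1) by blast
  have closed: "closed A" if "A \<in> \<C>" for A
    using assms(2) that compact_imp_closed by blast
  have "closed (\<Inter>\<C>)"
    using closed by (intro closed_Inter) blast
  moreover have "compact X"
    using assms(2) X by blast
  ultimately have "compact (\<Inter>\<C> \<inter> X)"
    by (rule closed_Int_compact)
  moreover have "\<Inter>\<C> \<inter> X = \<Inter>\<C>"
    using X by blast
  ultimately show "compact (\<Inter>\<C>)" by simp
  have "X \<inter> \<Inter>\<C> \<noteq> {}"
  proof (rule compact_imp_fip)
    show "compact X" using \<open>compact X\<close> .
    show "closed T" if "T \<in> \<C>" for T
      using closed that .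
    fix \<F> assume \<F>: "finite \<F>" "\<F> \<subseteq> \<C>"
    show "X \<inter> \<Inter>\<F> \<noteq> {}"
    proof (cases "\<F> = {}")
      case True
      then show ?thesis using X assms(2) by blast
    next
      case False
      have "\<F> \<subseteq> \<A>" and "\<forall>A\<in>\<F>. \<forall>B\<in>\<F>. A \<subseteq> B \<or> B \<subseteq> A"
        using assms(3) \<F>(2) unfolding subset_chain_def by blast+
      then have "subset.chain \<A> \<F>"
        unfolding subset_chain_def by blast
      then have "\<Inter>\<F> \<in> \<C>"
        using Inter_in_chain[OF \<F>(1) False] \<F>(2) by blast
      moreover have "\<Inter>\<F> \<subseteq> X \<or> X \<subseteq> \<Inter>\<F>"
        using assms(3) X calculation unfolding subset_chain_def by blast
      ultimately show ?thesis
        using assms(2) X by (metis inf.absorb1 inf.absorb2)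
    qed
  qed
  then show "\<Inter>\<C> \<noteq> {}" by blast
qed

text \<open>Zorn's lemma for reverse inclusion, applied to complements.\<close>
lemma minimal_compact_set_exists:
  fixes \<A> :: "'a::t2_space set set"
  assumes "\<A> \<noteq> {}" and compact: "\<And>A. A \<in> \<A> \<Longrightarrow> compact A \<and> A \<noteq> {}"
    and chain_closed: "\<And>\<C>. \<C> \<noteq> {} \<Longrightarrow> subset.chain \<A> \<C> \<Longrightarrow> compact (\<Inter>\<C>) \<Longrightarrow> \<Inter>\<C> \<noteq> {}
                         \<Longrightarrow> \<Inter>\<C> \<in> \<A>"
  shows "\<exists>M\<in>\<A>. \<forall>X\<in>\<A>. X \<subseteq> M \<longrightarrow> X = M"
proof -
  have "\<exists>M\<in>uminus ` \<A>. \<forall>X\<in>uminus ` \<A>. M \<subseteq> X \<longrightarrow> X = M"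
  proof (rule subset_Zorn_nonempty)
    fix \<C> assume "\<C> \<noteq> {}" and chain: "subset.chain (uminus ` \<A>) \<C>"
    then have ne: "uminus ` \<C> \<noteq> {}" and chain': "subset.chain \<A> (uminus ` \<C>)"
      by (auto simp: subset_chain_def)
    have "A \<in> uminus ` \<C> \<Longrightarrow> compact A \<and> A \<noteq> {}" for A
      using chain compact by (auto simp: subset_chain_def)
    then have "compact (\<Inter>(uminus ` \<C>)) \<and> \<Inter>(uminus ` \<C>) \<noteq> {}"
      using compact_Inter_chain[OF ne _ chain'] by blast
    then have "\<Inter>(uminus ` \<C>) \<in> \<A>"
      using chain_closed[OF ne chain'] by blast
    moreover have "\<Inter>(uminus ` \<C>) = - \<Union>\<C>" by auto
    ultimately have "- \<Union>\<C> \<in> \<A>" by simp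
    then show "\<Union>\<C> \<in> uminus ` \<A>"
      by (metis double_complement image_eqI)
  qed (use assms(1) in blast)
  then show ?thesis
    by (metis (no_types, lifting) Compl_subset_Compl_iff double_complement image_iff)
qed

lemma right_topological_semigroup_subset:
  assumes "right_topological_semigroup S" and "T \<subseteq> S"
    and "\<And>x y. x \<in> T \<Longrightarrow> y \<in> T \<Longrightarrow> x * y \<in> T"
  shows "right_topological_semigroup T"
  using assms continuous_on_subset unfolding right_topological_semigroup_def by blast

lemma compact_image_mult_right:
  assumes "right_topological_semigroup S" and "compact A" and "A \<subseteq> S" and "x \<in> S"
  shows "compact ((\<lambda>y. y * x) ` A)"
  using assms compact_continuous_image continuous_on_subset
  unfolding right_topological_semigroup_def by blast

text \<open>Ellis--Numakura: if A is a minimal compact subsemigroup and x \<in> A, then A x and the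
  closed set of y \<in> A with y x = x are compact subsemigroups of A, so both equal A and x x = x.\<close>
lemma idempotents_nonempty:
  fixes S :: "'a::{t2_space,semigroup_mult} set"
  assumes rts: "right_topological_semigroup S" and "compact S" and "S \<noteq> {}"
  shows "idempotents S \<noteq> {}"
proof -
  define \<A> where "\<A> = {A. A \<subseteq> S \<and> compact A \<and> A \<noteq> {} \<and> (\<forall>x\<in>A. \<forall>y\<in>A. x * y \<in> A)}"
  have "S \<in> \<A>"
    using assms unfolding \<A>_def right_topological_semigroup_def by blast
  moreover have "\<And>A. A \<in> \<A> \<Longrightarrow> compact A \<and> A \<noteq> {}"
    unfolding \<A>_def by blast
  moreover have "\<Inter>\<C> \<in> \<A>" if "\<C> \<noteq> {}" "subset.chain \<A> \<C>" "compact (\<Inter>\<C>)" "\<Inter>\<C> \<noteq> {}" for \<C>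
    using that unfolding \<A>_def subset_chain_def by blast
  ultimately obtain A where "A \<in> \<A>" and min: "\<And>B. B \<in> \<A> \<Longrightarrow> B \<subseteq> A \<Longrightarrow> B = A"
    using minimal_compact_set_exists[of \<A>] by (metis empty_iff)
  then have AS: "A \<subseteq> S" and "compact A" and "A \<noteq> {}" and mult: "\<And>x y. x \<in> A \<Longrightarrow> y \<in> A \<Longrightarrow> x * y \<in> A"
    unfolding \<A>_def by auto
  then obtain x where x: "x \<in> A" by blast
  have "(\<lambda>y. y * x) ` A \<in> \<A>"
    unfolding \<A>_def using compact_image_mult_right[OF rts \<open>compact A\<close> AS] x AS mult
    by (auto simp flip: mult.assoc)
  then have "(\<lambda>y. y * x) ` A = A"
    using min mult x by blast
  then obtain a where "a \<in> A" "a * x = x"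
    using x by (metis imageE)
  define B where "B = A \<inter> (\<lambda>y. y * x) -` {x}"
  have "continuous_on A (\<lambda>y. y * x)"
    using rts x AS continuous_on_subset unfolding right_topological_semigroup_def by blast
  then have "closedin (top_of_set A) B"
    unfolding B_def using continuous_closedin_preimage closed_singleton by blast
  then have "B \<in> \<A>"
    using AS \<open>compact A\<close> \<open>a \<in> A\<close> \<open>a * x = x\<close> mult closedin_compact
    unfolding \<A>_def B_def by (auto simp: mult.assoc)
  then have "B = A"
    using min unfolding B_def by blast
  then show ?thesis
    using x AS unfolding B_def idempotents_def by blast
qed

definition left_ideal :: "('a::semigroup_mult) set \<Rightarrow> 'a set \<Rightarrow> bool" where
  "left_ideal S L \<longleftrightarrow> L \<noteq> {} \<and> L \<subseteq> S \<and> (\<forall>x\<in>S. \<forall>y\<in>L. x * y \<in> L)"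

definition minimal_left_ideal :: "('a::semigroup_mult) set \<Rightarrow> 'a set \<Rightarrow> bool" where
  "minimal_left_ideal S L \<longleftrightarrow> left_ideal S L \<and> (\<forall>L'. left_ideal S L' \<longrightarrow> L' \<subseteq> L \<longrightarrow> L' = L)"

lemma left_ideal_Inter:
  assumes "\<C> \<noteq> {}" and "\<And>L. L \<in> \<C> \<Longrightarrow> left_ideal S L" and "\<Inter>\<C> \<noteq> {}"
  shows "left_ideal S (\<Inter>\<C>)"
  using assms unfolding left_ideal_def by blast

lemma left_ideal_image_mult_right:
  assumes "\<And>x y. x \<in> S \<Longrightarrow> y \<in> S \<Longrightarrow> x * y \<in> S" and "x \<in> S"
  shows "left_ideal S ((\<lambda>y. y * x) ` S)"
  using assms unfolding left_ideal_def by (auto simp flip: mult.assoc)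

lemma minimal_left_ideal_eq_image_mult_right:
  assumes "minimal_left_ideal S L" and "\<And>x y. x \<in> S \<Longrightarrow> y \<in> S \<Longrightarrow> x * y \<in> S" and "x \<in> L"
  shows "(\<lambda>y. y * x) ` S = L"
proof -
  have "x \<in> S" and "(\<lambda>y. y * x) ` S \<subseteq> L"
    using assms unfolding minimal_left_ideal_def left_ideal_def by auto
  then show ?thesis
    using assms left_ideal_image_mult_right unfolding minimal_left_ideal_def by blast
qed

text \<open>A left ideal that is minimal among the compact left ideals is minimal outright,
  because every left ideal L' contains a compact one, namely S x for x \<in> L'.\<close>
lemma minimal_left_ideal_below:
  fixes S :: "'a::{t2_space,semigroup_mult} set"
  assumes rts: "right_topological_semigroup S" and "compact S" and "v \<in> S"
  shows "\<exists>L. minimal_left_ideal S L \<and> compact L \<and> L \<subseteq> (\<lambda>y. y * v) ` S"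
proof -
  have mult: "\<And>x y. x \<in> S \<Longrightarrow> y \<in> S \<Longrightarrow> x * y \<in> S"
    using rts unfolding right_topological_semigroup_def by blast
  define \<A> where "\<A> = {L. left_ideal S L \<and> compact L \<and> L \<subseteq> (\<lambda>y. y * v) ` S}"
  have "(\<lambda>y. y * v) ` S \<in> \<A>"
    unfolding \<A>_def using left_ideal_image_mult_right[OF mult \<open>v \<in> S\<close>]
      compact_image_mult_right[OF rts \<open>compact S\<close> _ \<open>v \<in> S\<close>] by blast
  moreover have "\<And>L. L \<in> \<A> \<Longrightarrow> compact L \<and> L \<noteq> {}"
    unfolding \<A>_def left_ideal_def by blast
  moreover have "\<Inter>\<C> \<in> \<A>" if "\<C> \<noteq> {}" "subset.chain \<A> \<C>" "compact (\<Inter>\<C>)" "\<Inter>\<C> \<noteq> {}" for \<C>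
  proof -
    have "\<C> \<subseteq> \<A>"
      using that(2) unfolding subset_chain_def by blast
    then have "left_ideal S (\<Inter>\<C>)" and "\<Inter>\<C> \<subseteq> (\<lambda>y. y * v) ` S"
      using left_ideal_Inter[OF that(1) _ that(4)] that(1) unfolding \<A>_def by blast+
    then show ?thesis
      unfolding \<A>_def using that(3) by blast
  qed
  ultimately obtain L where "L \<in> \<A>" and min: "\<And>L'. L' \<in> \<A> \<Longrightarrow> L' \<subseteq> L \<Longrightarrow> L' = L"
    using minimal_compact_set_exists[of \<A>] by (metis empty_iff)
  have "L' = L" if L': "left_ideal S L'" "L' \<subseteq> L" for L'
  proof -
    obtain x where "x \<in> L'" "x \<in> S"
      using L'(1) unfolding left_ideal_def by blast
    have "(\<lambda>y. y * x) ` S \<subseteq> L'"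
      using L'(1) \<open>x \<in> L'\<close> unfolding left_ideal_def by blast
    moreover have "(\<lambda>y. y * x) ` S \<in> \<A>"
      using left_ideal_image_mult_right[OF mult \<open>x \<in> S\<close>]
        compact_image_mult_right[OF rts \<open>compact S\<close> order_refl \<open>x \<in> S\<close>]
        calculation L'(2) \<open>L \<in> \<A>\<close>
      unfolding \<A>_def by blast
    ultimately show ?thesis
      using min L' by blast
  qed
  then show ?thesis
    using \<open>L \<in> \<A>\<close> unfolding \<A>_def minimal_left_ideal_def by blast
qed

lemma minimal_left_ideal_subset_smallest_ideal:
  assumes "minimal_left_ideal S L" and mult: "\<And>x y. x \<in> S \<Longrightarrow> y \<in> S \<Longrightarrow> x * y \<in> S"
  shows "L \<subseteq> smallest_ideal S"
  unfolding smallest_ideal_def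
proof (intro subsetI InterI, clarify)
  fix x J assume "x \<in> L" "two_sided_ideal S J"
  then obtain j where "j \<in> J" and J: "J \<subseteq> S" "\<forall>x\<in>S. \<forall>y\<in>J. x * y \<in> J \<and> y * x \<in> J"
    unfolding two_sided_ideal_def by blast
  have "x \<in> S" "j * x \<in> L"
    using assms(1) \<open>x \<in> L\<close> \<open>j \<in> J\<close> J unfolding minimal_left_ideal_def left_ideal_def by blast+
  then obtain z where "z \<in> S" "x = z * (j * x)"
    using minimal_left_ideal_eq_image_mult_right[OF assms] \<open>x \<in> L\<close> by blast
  then show "x \<in> J"
    using J \<open>j \<in> J\<close> \<open>x \<in> S\<close> by metis
qed

lemma minimal_idempotent_if_in_minimal_left_ideal:
  assumes L: "minimal_left_ideal S L" and mult: "\<And>x y. x \<in> S \<Longrightarrow> y \<in> S \<Longrightarrow> x * y \<in> S"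
    and "u \<in> L" and "u * u = u"
  shows "minimal_idempotent S u"
  unfolding minimal_idempotent_def
proof (intro conjI ballI impI)
  show "u \<in> idempotents S"
    using assms unfolding minimal_left_ideal_def left_ideal_def idempotents_def by blast
  fix e assume "e \<in> idempotents S" and "idem_le e u"
  then have "e * u = e" "u * e = e" "e * e = e" "e \<in> S"
    unfolding idem_le_def idempotents_def by auto
  then have "e \<in> L"
    using L \<open>u \<in> L\<close> unfolding minimal_left_ideal_def left_ideal_def by metis
  then obtain z where "u = z * e"
    using minimal_left_ideal_eq_image_mult_right[OF L mult] \<open>u \<in> L\<close> by blast
  then show "e = u"
    using \<open>e * e = e\<close> \<open>u * e = e\<close> by (metis mult.assoc)
qed

lemma minimal_idempotent_below:
  fixes S :: "'a::{t2_space,semigroup_mult} set"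
  assumes rts: "right_topological_semigroup S" and "compact S" and "v \<in> idempotents S"
  shows "\<exists>u. minimal_idempotent S u \<and> u \<in> smallest_ideal S \<and> idem_le u v"
proof -
  have mult: "\<And>x y. x \<in> S \<Longrightarrow> y \<in> S \<Longrightarrow> x * y \<in> S"
    using rts unfolding right_topological_semigroup_def by blast
  have "v \<in> S" "v * v = v"
    using assms(3) unfolding idempotents_def by auto
  obtain L where L: "minimal_left_ideal S L" "compact L" "L \<subseteq> (\<lambda>y. y * v) ` S"
    using minimal_left_ideal_below[OF rts \<open>compact S\<close> \<open>v \<in> S\<close>] by blast
  then have LS: "L \<subseteq> S" and Lne: "L \<noteq> {}" and ideal: "\<And>x y. x \<in> S \<Longrightarrow> y \<in> L \<Longrightarrow> x * y \<in> L"
    unfolding minimal_left_ideal_def left_ideal_def by auto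
  have "right_topological_semigroup L"
    using right_topological_semigroup_subset[OF rts LS] ideal LS by blast
  then obtain w where "w \<in> L" "w * w = w"
    using idempotents_nonempty[OF _ \<open>compact L\<close> Lne] unfolding idempotents_def by blast
  moreover obtain y where "w = y * v"
    using \<open>w \<in> L\<close> L(3) by blast
  ultimately have wv: "w * v = w"
    using \<open>v * v = v\<close> by (simp add: mult.assoc)
  define u where "u = v * w"
  have "u \<in> L"
    unfolding u_def using ideal \<open>v \<in> S\<close> \<open>w \<in> L\<close> by blast
  moreover have "u * u = u" "idem_le u v"
    unfolding u_def idem_le_def using wv \<open>w * w = w\<close> \<open>v * v = v\<close> by (metis mult.assoc)+
  ultimately show ?thesis
    using minimal_idempotent_if_in_minimal_left_ideal[OF L(1) mult]
      minimal_left_ideal_subset_smallest_ideal[OF L(1) mult] by blast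
qed

lemma right_topological_semigroup_image:
  assumes "right_topological_semigroup S" and "h ` S \<subseteq> S"
    and hom: "\<And>x y. x \<in> S \<Longrightarrow> y \<in> S \<Longrightarrow> h (x * y) = h x * h y"
  shows "right_topological_semigroup (h ` S)"
proof (rule right_topological_semigroup_subset[OF assms(1,2)])
  fix x y assume "x \<in> h ` S" "y \<in> h ` S"
  then show "x * y \<in> h ` S"
    using assms unfolding right_topological_semigroup_def by (auto simp flip: hom)
qed

lemma hom_image_idem_le:
  assumes hom: "\<And>x y. x \<in> S \<Longrightarrow> y \<in> S \<Longrightarrow> h (x * y) = h x * h y"
    and "u \<in> S" and "v \<in> S" and "u * u = u" and "idem_le u v"
  shows "h u * h u = h u" and "idem_le (h u) (h v)"
  using assms by (metis idem_le_def)+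

lemma absorbing_action_const_below_minimal_idempotent:
  assumes act: "monoid_acts_by_cont_endos M act U"
    and absorb: "\<forall>a\<in>M. \<forall>b\<in>M. b \<noteq> 1 \<longrightarrow> a * b = b"
    and "e \<in> M" "e \<noteq> 1" "a \<in> M" "a \<noteq> 1"
    and v: "minimal_idempotent (act e ` U) v"
    and u: "u \<in> idempotents U" "idem_le u v"
  shows "act a u = v"
proof -
  have act_mult: "\<And>a b x. a \<in> M \<Longrightarrow> b \<in> M \<Longrightarrow> x \<in> U \<Longrightarrow> act (a * b) x = act a (act b x)"
    and maps: "act a ` U \<subseteq> U"
    and hom: "\<And>x y. x \<in> U \<Longrightarrow> y \<in> U \<Longrightarrow> act a (x * y) = act a x * act a y"
    using act \<open>a \<in> M\<close> unfolding monoid_acts_by_cont_endos_def by blast+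
  have "u \<in> U" "u * u = u"
    using u unfolding idempotents_def by auto
  obtain x where "x \<in> U" and vx: "v = act e x"
    using v unfolding minimal_idempotent_def idempotents_def by blast
  have "act a v = v" and "v \<in> U"
    using act_mult[OF \<open>a \<in> M\<close> \<open>e \<in> M\<close> \<open>x \<in> U\<close>] absorb assms(3-5) vx \<open>x \<in> U\<close> maps
      act \<open>e \<in> M\<close> unfolding monoid_acts_by_cont_endos_def by (metis image_subset_iff)+
  have "act a u \<in> act e ` U"
    using act_mult[OF \<open>e \<in> M\<close> \<open>a \<in> M\<close> \<open>u \<in> U\<close>] absorb assms(3-6) maps \<open>u \<in> U\<close>
    by (metis image_eqI image_subset_iff)
  moreover have "act a u * act a u = act a u" "idem_le (act a u) v"
    using hom_image_idem_le[OF hom \<open>u \<in> U\<close> \<open>v \<in> U\<close> \<open>u * u = u\<close> u(2)] \<open>act a v = v\<close> by auto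
  ultimately show ?thesis
    using v unfolding minimal_idempotent_def idempotents_def by blast
qed

theorem lemma2p6:
  fixes U :: "('a::{t2_space,semigroup_mult}) set"
    and M :: "('m::monoid_mult) set"
    and act :: "'m \<Rightarrow> 'a \<Rightarrow> 'a"
  assumes "U \<noteq> {}" and "compact U" and "right_topological_semigroup U"
    and "finite M" and "monoid_acts_by_cont_endos M act U"
    and "\<forall>a\<in>M. \<forall>b\<in>M. b \<noteq> 1 \<longrightarrow> a * b = b"
  shows "\<exists>u1. minimal_idempotent U u1 \<and> u1 \<in> smallest_ideal U \<and>
           (\<forall>a\<in>M. \<forall>b\<in>M. a \<noteq> 1 \<and> b \<noteq> 1 \<longrightarrow> act a u1 = act b u1)"
proof (cases "M \<subseteq> {1}")
  case True
  obtain v where "v \<in> idempotents U"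
    using idempotents_nonempty[OF assms(3,2,1)] by blast
  with True show ?thesis
    using minimal_idempotent_below[OF assms(3,2)] by blast
next
  case False
  then obtain e where "e \<in> M" "e \<noteq> 1" by blast
  define V where "V = act e ` U"
  have "act e ` U \<subseteq> U" "continuous_on U (act e)"
    and hom: "\<And>x y. x \<in> U \<Longrightarrow> y \<in> U \<Longrightarrow> act e (x * y) = act e x * act e y"
    using assms(5) \<open>e \<in> M\<close> unfolding monoid_acts_by_cont_endos_def by blast+
  then have "V \<subseteq> U" "compact V" "V \<noteq> {}" "right_topological_semigroup V"
    using assms(1-3) compact_continuous_image[OF _ assms(2)]
      right_topological_semigroup_image[OF assms(3) _ hom]
    unfolding V_def by auto
  then obtain v where v: "minimal_idempotent V v"
    using idempotents_nonempty minimal_idempotent_below by blast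
  then have "v \<in> idempotents U"
    using \<open>V \<subseteq> U\<close> unfolding minimal_idempotent_def idempotents_def by blast
  then obtain u where "minimal_idempotent U u" "u \<in> smallest_ideal U" "idem_le u v"
    using minimal_idempotent_below[OF assms(3,2)] by blast
  moreover have "u \<in> idempotents U"
    using \<open>minimal_idempotent U u\<close> unfolding minimal_idempotent_def by blast
  ultimately show ?thesis
    using absorbing_action_const_below_minimal_idempotent[OF assms(5,6) \<open>e \<in> M\<close> \<open>e \<noteq> 1\<close>
        _ _ v[unfolded V_def]] by metis
qed

end
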